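(* Let $q$ be a prime power with $q\equiv 3\pmod 8$, and let $f(x)=x^2\left(x^{(q-1)/2}+3\right)$ or $f(x)=x^2\left(x^{(q-1)/2}-3\right)$ in $\mathbb{F}_q[x]$. Then $f$ is a permutation polynomial of $\mathbb{F}_q$ and $\delta_f\le 4$.
   Context: A polynomial $f\in\mathbb{F}_q[x]$ is a permutation polynomial of $\mathbb{F}_q$ if $c\mapsto f(c)$ is a bijection of $\mathbb{F}_q$. For $a\in\mathbb{F}_q^*$, $\Delta_{f,a}(x)=f(x+a)-f(x)$, and the differential uniformity is $\delta_f=\max_{a\in\mathbb{F}_q^*,\,c\in\mathbb{F}_q}|\{x\in\mathbb{F}_q:\Delta_{f,a}(x)=c\}|$. *)

theory Defs
  imports "HOL-Computational_Algebra.Polynomial" "HOL-Library.Cardinality"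
begin

text \<open>Finite field F_q is modelled as a type 'a of class {finite, field}, q = CARD('a).\<close>

definition permutation_poly :: "'a::{finite,field} poly \<Rightarrow> bool" where
  "permutation_poly f \<longleftrightarrow> bij (poly f)"

definition diff_uniformity :: "'a::{finite,field} poly \<Rightarrow> nat" where
  "diff_uniformity f =
     Max {card {x. poly f (x + a) - poly f x = c} | a c. a \<noteq> 0}"

end

theory Submission
  imports Defs
begin

text \<open>
  Write \<open>\<chi>(x) = x^((q-1)/2)\<close> for the quadratic character, so the polynomial map is
  \<open>f(x) = x\<^sup>2 (\<chi>(x) + s)\<close>. For \<open>q \<equiv> 3 (mod 8)\<close> both \<open>-1\<close> and \<open>2\<close> are non-squares, so
  \<open>\<chi>(\<chi>(x) \<plusminus> 3) = \<chi>(x)\<close> and hence \<open>\<chi>(f(x)) = \<chi>(x)\<close>. Thus \<open>f(x) = f(y)\<close> forces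
  \<open>x\<^sup>2 = y\<^sup>2\<close> and \<open>\<chi>(x) = \<chi>(y)\<close>, i.e. \<open>x = y\<close>.

  For the differential uniformity, \<open>x \<mapsto> -x\<close> turns \<open>s = -3\<close> into \<open>s = 3\<close>, and the
  substitution \<open>x \<mapsto> b x\<close> with \<open>b = \<plusminus>a\<close> a square reduces the shift \<open>a\<close> to \<open>1\<close>. For \<open>s = 3\<close>,
  \<open>f(t)\<close> is \<open>4t\<^sup>2\<close> or \<open>2t\<^sup>2\<close> according as \<open>t\<close> is a square or not, so \<open>f(t+1) - f(t) = c\<close> is linear
  or quadratic in \<open>t\<close> in each of the four cases for the characters of \<open>t\<close> and \<open>t + 1\<close>. Comparing
  the characters of \<open>4 - c\<close>, resp. \<open>-2 - c\<close>, across competing cases leaves at most two solutions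
  that are squares and at most two that are not.
\<close>

lemma card_eq_mult_card_image:
  assumes "finite A" and "\<And>x. x \<in> A \<Longrightarrow> card {y \<in> A. f y = f x} = k"
  shows "card A = k * card (f ` A)"
proof -
  have "card A = card (\<Union>z\<in>f ` A. {y \<in> A. f y = z})"
    by (rule arg_cong[where f = card]) blast
  also have "\<dots> = (\<Sum>z\<in>f ` A. card {y \<in> A. f y = z})"
    by (rule card_UN_disjoint) (use assms(1) in auto)
  also have "\<dots> = (\<Sum>z\<in>f ` A. k)"
    using assms(2) by (intro sum.cong) auto
  finally show ?thesis by simp
qed

lemma card_linear_eq_le_1:
  fixes m :: "'a::idom"
  assumes "m \<noteq> 0"
  shows "card {t. m * t + k = d} \<le> 1"
proof (cases "\<exists>t0. m * t0 + k = d")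
  case True
  then obtain t0 where "m * t0 + k = d" by blast
  hence "{t. m * t + k = d} \<subseteq> {t0}" using assms by auto
  hence "card {t. m * t + k = d} \<le> card {t0}" by (rule card_mono[rotated]) simp
  thus ?thesis by simp
qed simp

lemma card_shifted_square_eq_le_2: "card {t::'a::idom. (t + k)\<^sup>2 = d} \<le> 2"
proof (cases "\<exists>r. r\<^sup>2 = d")
  case True
  then obtain r where r: "r\<^sup>2 = d" by blast
  have "t = r - k \<or> t = - r - k" if "(t + k)\<^sup>2 = d" for t
  proof -
    have "(t + k)\<^sup>2 = r\<^sup>2" using that r by simp
    hence "t + k = r \<or> t + k = - r" by (simp only: power2_eq_iff)
    thus ?thesis by (simp only: eq_diff_eq)
  qed
  hence "{t. (t + k)\<^sup>2 = d} \<subseteq> {r - k, - r - k}" by blast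
  hence "card {t. (t + k)\<^sup>2 = d} \<le> card {r - k, - r - k}"
    by (rule card_mono[rotated]) simp
  also have "\<dots> \<le> 2" by (simp add: card_insert_le_m1)
  finally show ?thesis .
qed simp

lemma card_Collect_bij:
  assumes "bij h"
  shows "card {x. P (h x)} = card {y. P y}"
  using card_vimage_inj[of h "{y. P y}"] assms by (simp add: bij_def vimage_def)

lemma two_neq_zero_if_odd_card:
  assumes "odd CARD('a::{finite,field})"
  shows "(2::'a) \<noteq> 0"
proof
  assume two: "(2::'a) = 0"
  have "CARD('a) = 2 * card ((\<lambda>x. {x, x + 1}) ` (UNIV :: 'a set))"
  proof (rule card_eq_mult_card_image)
    fix x :: 'a
    have "x + 1 + 1 = x" using two by (simp add: add.assoc one_add_one)
    hence "{y. {y, y + 1} = {x, x + 1}} = {x, x + 1}"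
      by (auto simp: doubleton_eq_iff)
    thus "card {y \<in> UNIV. {y, y + 1} = {x, x + 1}} = 2" by simp
  qed simp
  thus False using assms by simp
qed

lemma one_neq_minus_one_if_odd_card:
  assumes "odd CARD('a::{finite,field})"
  shows "(1::'a) \<noteq> -1"
  using two_neq_zero_if_odd_card[OF assms] by (metis one_add_one add.right_inverse)

lemma power_card_minus_one_eq_1:
  fixes x :: "'a::{finite,field}"
  assumes "x \<noteq> 0"
  shows "x ^ (CARD('a) - 1) = 1"
proof -
  let ?U = "UNIV - {0::'a}"
  have "(\<Prod>y\<in>?U. x * y) = (\<Prod>y\<in>?U. y)"
    by (rule prod.reindex_bij_witness[of _ "\<lambda>y. y / x" "\<lambda>y. x * y"]) (use assms in auto)
  moreover have "(\<Prod>y\<in>?U. x * y) = x ^ (CARD('a) - 1) * (\<Prod>y\<in>?U. y)"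
    by (simp add: prod.distrib card_Diff_subset)
  moreover have "(\<Prod>y\<in>?U. y) \<noteq> 0" by simp
  ultimately show ?thesis by simp
qed

lemma card_ge_3_if_odd:
  assumes "odd CARD('a::{finite,field})"
  shows "CARD('a) \<ge> 3"
proof -
  have "card {0::'a, 1} \<le> CARD('a)" by (rule card_mono) auto
  thus ?thesis using assms by simp presburger
qed

section \<open>Quadratic character\<close>

definition qchar :: "'a::{finite,field} \<Rightarrow> 'a" where
  "qchar x = x ^ ((CARD('a) - 1) div 2)"

lemma qchar_mult: "qchar (x * y) = qchar x * qchar y"
  by (simp add: qchar_def power_mult_distrib)

lemma qchar_power: "qchar (x ^ n) = qchar x ^ n"
  by (metis qchar_def power_mult mult.commute)

lemma qchar_one [simp]: "qchar 1 = 1"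
  by (simp add: qchar_def)

lemma qchar_zero:
  assumes "odd CARD('a::{finite,field})"
  shows "qchar (0::'a) = 0"
  using card_ge_3_if_odd[OF assms] by (simp add: qchar_def)

lemma qchar_square:
  fixes x :: "'a::{finite,field}"
  assumes "odd CARD('a)" and "x \<noteq> 0"
  shows "qchar (x\<^sup>2) = 1"
proof -
  have "qchar (x\<^sup>2) = x ^ (2 * ((CARD('a) - 1) div 2))"
    by (simp add: qchar_def power_mult)
  also have "2 * ((CARD('a) - 1) div 2) = CARD('a) - 1"
    using assms(1) by presburger
  finally show ?thesis using power_card_minus_one_eq_1[OF assms(2)] by simp
qed

lemma qchar_nonzero_cases:
  fixes x :: "'a::{finite,field}"
  assumes "odd CARD('a)" and "x \<noteq> 0"
  shows "qchar x = 1 \<or> qchar x = -1"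
  using qchar_square[OF assms] by (simp add: qchar_power power2_eq_1_iff)

lemma qchar_eq_0_iff:
  fixes x :: "'a::{finite,field}"
  assumes "odd CARD('a)"
  shows "qchar x = 0 \<longleftrightarrow> x = 0"
  using qchar_nonzero_cases[OF assms, of x] qchar_zero[OF assms] by (cases "x = 0") auto

lemma qchar_ne_minus_one_cases:
  fixes x :: "'a::{finite,field}"
  assumes "odd CARD('a)" and "qchar x \<noteq> -1"
  shows "qchar x = 0 \<or> qchar x = 1"
  using assms qchar_nonzero_cases[OF assms(1), of x] qchar_zero[OF assms(1)] by (cases "x = 0") auto

lemma qchar_minus_one:
  assumes "CARD('a::{finite,field}) mod 4 = 3"
  shows "qchar (-1::'a) = -1"
proof -
  have "odd ((CARD('a) - 1) div 2)" using assms by presburger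
  thus ?thesis by (simp add: qchar_def)
qed

lemma qchar_uminus:
  fixes x :: "'a::{finite,field}"
  assumes "CARD('a) mod 4 = 3"
  shows "qchar (- x) = - qchar x"
  using qchar_mult[of "-1" x] qchar_minus_one[OF assms] by simp

lemma card_nonzero_squares:
  assumes "odd CARD('a::{finite,field})"
  shows "card ((\<lambda>x. x\<^sup>2) ` (UNIV - {0::'a})) = (CARD('a) - 1) div 2"
proof -
  have "card (UNIV - {0::'a}) = 2 * card ((\<lambda>x. x\<^sup>2) ` (UNIV - {0::'a}))"
  proof (rule card_eq_mult_card_image)
    fix x :: 'a
    assume "x \<in> UNIV - {0}"
    hence "x \<noteq> - x" using two_neq_zero_if_odd_card[OF assms] by (auto simp: eq_neg_iff_add_eq_0)
    moreover have "{y \<in> UNIV - {0}. y\<^sup>2 = x\<^sup>2} = {x, - x}"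
      using \<open>x \<in> UNIV - {0}\<close> by (auto simp: power2_eq_iff)
    ultimately show "card {y \<in> UNIV - {0}. y\<^sup>2 = x\<^sup>2} = 2" by simp
  qed simp
  thus ?thesis by (simp add: card_Diff_subset)
qed

text \<open>The converse of Euler's criterion: the \<open>(q - 1)/2\<close> nonzero squares already exhaust the
  roots of \<open>x^((q-1)/2) - 1\<close>.\<close>

lemma exists_square_if_qchar_eq_1:
  fixes u :: "'a::{finite,field}"
  assumes odd: "odd CARD('a)" and "qchar u = 1"
  shows "\<exists>r. u = r\<^sup>2"
proof -
  define m where "m = (CARD('a) - 1) div 2"
  define P :: "'a poly" where "P = monom 1 m - 1"
  have poly_P: "poly P x = x ^ m - 1" for x
    by (simp add: P_def poly_monom)
  have "m \<ge> 1" using card_ge_3_if_odd[OF odd] by (simp add: m_def)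
  hence "P \<noteq> 0" using poly_P[of 0] by (auto simp: power_0_left)
  hence "card {x. poly P x = 0} \<le> degree P" by (rule card_poly_roots_bound)
  also have "degree P \<le> m"
    unfolding P_def by (rule degree_diff_le) (simp_all add: degree_monom_le)
  finally have "card {x. poly P x = 0} \<le> card ((\<lambda>x. x\<^sup>2) ` (UNIV - {0::'a}))"
    by (simp add: card_nonzero_squares[OF odd] m_def)
  moreover have "(\<lambda>x. x\<^sup>2) ` (UNIV - {0}) \<subseteq> {x. poly P x = 0}"
    using qchar_square[OF odd] by (auto simp: poly_P qchar_def m_def)
  ultimately have "(\<lambda>x. x\<^sup>2) ` (UNIV - {0}) = {x. poly P x = 0}"
    by (intro card_seteq) auto
  moreover have "u \<in> {x. poly P x = 0}"
    using assms(2) by (simp add: poly_P qchar_def m_def)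
  ultimately show ?thesis by blast
qed

lemma one_plus_square_neq_zero:
  fixes t :: "'a::{finite,field}"
  assumes "CARD('a) mod 4 = 3"
  shows "1 + t\<^sup>2 \<noteq> 0"
proof
  assume "1 + t\<^sup>2 = 0"
  hence "t\<^sup>2 = -1" by (simp add: add_eq_0_iff add.commute)
  moreover from this have "t \<noteq> 0" by auto
  moreover have odd: "odd CARD('a)" using assms by presburger
  ultimately have "qchar (-1::'a) = 1" using qchar_square[of t] by simp
  thus False using qchar_minus_one[OF assms] one_neq_minus_one_if_odd_card[OF odd] by simp
qed

lemma unit_circle_param:
  fixes t :: "'a::field"
  assumes two: "(2::'a) \<noteq> 0" and den: "1 + t\<^sup>2 \<noteq> 0"
  defines "x \<equiv> (1 - t\<^sup>2) / (1 + t\<^sup>2)" and "y \<equiv> 2 * t / (1 + t\<^sup>2)"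
  shows "x\<^sup>2 + y\<^sup>2 = 1" and "x \<noteq> -1" and "y / (1 + x) = t"
proof -
  have "(1 - t\<^sup>2)\<^sup>2 + (2 * t)\<^sup>2 = (1 + t\<^sup>2)\<^sup>2" by algebra
  thus "x\<^sup>2 + y\<^sup>2 = 1" using den by (simp add: x_def y_def power_divide divide_simps)
  show "x \<noteq> -1" using den two by (simp add: x_def field_simps)
  have "1 + x = 2 / (1 + t\<^sup>2)" using den by (simp add: x_def field_simps)
  thus "y / (1 + x) = t" using den two by (simp add: y_def)
qed

lemma unit_circle_param_inverse:
  fixes x y :: "'a::field"
  assumes two: "(2::'a) \<noteq> 0" and circle: "x\<^sup>2 + y\<^sup>2 = 1" and "1 + x \<noteq> 0"
  defines "t \<equiv> y / (1 + x)"
  shows "(1 - t\<^sup>2) / (1 + t\<^sup>2) = x" and "2 * t / (1 + t\<^sup>2) = y"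
proof -
  have "t\<^sup>2 = y\<^sup>2 / (1 + x)\<^sup>2" by (simp add: t_def power_divide)
  also have "y\<^sup>2 = (1 - x) * (1 + x)" using circle by (simp add: algebra_simps power2_eq_square)
  also have "(1 - x) * (1 + x) / (1 + x)\<^sup>2 = (1 - x) / (1 + x)"
    using \<open>1 + x \<noteq> 0\<close> by (simp add: power2_eq_square)
  finally have "1 + t\<^sup>2 = 2 / (1 + x)" and "1 - t\<^sup>2 = 2 * x / (1 + x)"
    using \<open>1 + x \<noteq> 0\<close> by (simp_all add: field_simps)
  thus "(1 - t\<^sup>2) / (1 + t\<^sup>2) = x" and "2 * t / (1 + t\<^sup>2) = y"
    using \<open>1 + x \<noteq> 0\<close> two by (simp_all add: t_def)
qed

text \<open>Stereographic projection from \<open>(-1, 0)\<close>; it is defined on all of the field because \<open>-1\<close>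
  is not a square.\<close>

lemma card_unit_circle:
  assumes "CARD('a::{finite,field}) mod 4 = 3"
  shows "card {(x, y). (x::'a)\<^sup>2 + y\<^sup>2 = 1} = CARD('a) + 1"
proof -
  have two: "(2::'a) \<noteq> 0" using assms by (intro two_neq_zero_if_odd_card) presburger
  have den: "1 + t\<^sup>2 \<noteq> 0" for t :: 'a by (rule one_plus_square_neq_zero[OF assms])
  define C where "C = {(x, y). (x::'a)\<^sup>2 + y\<^sup>2 = 1}"
  define \<phi> where "\<phi> t = ((1 - t\<^sup>2) / (1 + t\<^sup>2), 2 * t / (1 + t\<^sup>2))" for t :: 'a
  have "bij_betw \<phi> UNIV (C - {(-1, 0)})"
  proof (rule bij_betw_byWitness[where f' = "\<lambda>(x, y). y / (1 + x)"])
    show "\<forall>t\<in>UNIV. (\<lambda>(x, y). y / (1 + x)) (\<phi> t) = t"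
      using unit_circle_param(3)[OF two den] by (simp add: \<phi>_def)
    show "\<phi> ` UNIV \<subseteq> C - {(-1, 0)}"
      using unit_circle_param(1,2)[OF two den] by (auto simp: \<phi>_def C_def)
    show "\<forall>p\<in>C - {(-1, 0)}. \<phi> ((\<lambda>(x, y). y / (1 + x)) p) = p"
    proof
      fix p
      assume p: "p \<in> C - {(-1, 0)}"
      obtain x y where p_eq: "p = (x, y)" by (cases p)
      have circle: "x\<^sup>2 + y\<^sup>2 = 1" and not_pole: "(x, y) \<noteq> (-1, 0)"
        using p by (auto simp: p_eq C_def)
      have "1 + x \<noteq> 0"
      proof
        assume "1 + x = 0"
        hence "x = -1" and "y = 0" using circle by (auto simp: add_eq_0_iff)
        thus False using not_pole by simp
      qed
      thus "\<phi> ((\<lambda>(x, y). y / (1 + x)) p) = p"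
        using unit_circle_param_inverse[OF two circle] by (simp add: p_eq \<phi>_def)
    qed
  qed simp
  hence "card (C - {(-1, 0)}) = CARD('a)" by (simp add: bij_betw_same_card)
  moreover have "(-1, 0) \<in> C" by (simp add: C_def)
  ultimately show ?thesis unfolding C_def[symmetric] using card_Suc_Diff1[of C "(-1, 0)"] by simp
qed

lemma card_unit_circle_off_axes:
  assumes "CARD('a::{finite,field}) mod 4 = 3"
  shows "card {(x, y). (x::'a)\<^sup>2 + y\<^sup>2 = 1 \<and> x \<noteq> 0 \<and> y \<noteq> 0} = CARD('a) - 3"
proof -
  have odd: "odd CARD('a)" using assms by presburger
  let ?C = "{(x, y). (x::'a)\<^sup>2 + y\<^sup>2 = 1}"
  let ?D = "{(x, y). (x::'a)\<^sup>2 + y\<^sup>2 = 1 \<and> x \<noteq> 0 \<and> y \<noteq> 0}"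
  let ?axes = "{(1, 0), (-1, 0), (0, 1), (0::'a, -1::'a)}"
  have "?C = ?D \<union> ?axes" by (auto simp: power2_eq_1_iff)
  moreover have "card (?D \<union> ?axes) = card ?D + card ?axes"
    by (rule card_Un_disjoint) auto
  moreover have "card ?axes = 4"
    using one_neq_minus_one_if_odd_card[OF odd] by (auto simp: card_insert_if)
  ultimately have "card ?C = card ?D + 4" by simp
  thus ?thesis using card_unit_circle[OF assms] by simp
qed

lemma card_unit_circle_off_axes_eq_4_mult:
  fixes D :: "('a::{finite,field} \<times> 'a) set"
  assumes "odd CARD('a)"
  defines "D \<equiv> {(x, y). x\<^sup>2 + y\<^sup>2 = 1 \<and> x \<noteq> 0 \<and> y \<noteq> 0}"
  shows "card D = 4 * card ((\<lambda>(x, y). x\<^sup>2) ` D)"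
proof (rule card_eq_mult_card_image)
  have neq_neg: "z \<noteq> - z" if "z \<noteq> 0" for z :: 'a
    using that two_neq_zero_if_odd_card[OF assms(1)] by (auto simp: eq_neg_iff_add_eq_0)
  fix p
  assume "p \<in> D"
  then obtain x y where p: "p = (x, y)" "x\<^sup>2 + y\<^sup>2 = 1" "x \<noteq> 0" "y \<noteq> 0"
    by (auto simp: D_def)
  have fiber_iff: "(x', y') \<in> D \<and> x'\<^sup>2 = x\<^sup>2 \<longleftrightarrow> x'\<^sup>2 = x\<^sup>2 \<and> y'\<^sup>2 = y\<^sup>2" for x' y'
  proof
    assume "(x', y') \<in> D \<and> x'\<^sup>2 = x\<^sup>2"
    hence "x\<^sup>2 + y'\<^sup>2 = x\<^sup>2 + y\<^sup>2" and "x'\<^sup>2 = x\<^sup>2" using p(2) by (auto simp: D_def)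
    thus "x'\<^sup>2 = x\<^sup>2 \<and> y'\<^sup>2 = y\<^sup>2" by simp
  next
    assume "x'\<^sup>2 = x\<^sup>2 \<and> y'\<^sup>2 = y\<^sup>2"
    thus "(x', y') \<in> D \<and> x'\<^sup>2 = x\<^sup>2" using p by (auto simp: D_def)
  qed
  have "{q \<in> D. (\<lambda>(x, y). x\<^sup>2) q = (\<lambda>(x, y). x\<^sup>2) p} = {x, -x} \<times> {y, -y}"
  proof (rule set_eqI)
    fix q :: "'a \<times> 'a"
    obtain x' y' where "q = (x', y')" by (cases q)
    thus "q \<in> {q \<in> D. (\<lambda>(x, y). x\<^sup>2) q = (\<lambda>(x, y). x\<^sup>2) p} \<longleftrightarrow> q \<in> {x, -x} \<times> {y, -y}"
      using fiber_iff[of x' y'] p(1) by (simp add: power2_eq_iff) blast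
  qed
  thus "card {q \<in> D. (\<lambda>(x, y). x\<^sup>2) q = (\<lambda>(x, y). x\<^sup>2) p} = 4"
    using neq_neg p by (simp add: card_cartesian_product)
qed (simp add: D_def)

lemma odd_card_if_closed_under_one_minus:
  fixes U :: "'a::field set"
  assumes "finite U" and two: "(2::'a) \<noteq> 0" and "1 / 2 \<in> U"
    and closed: "\<And>u. u \<in> U \<Longrightarrow> 1 - u \<in> U"
  shows "odd (card U)"
proof -
  have "card (U - {1 / 2}) = 2 * card ((\<lambda>u. {u, 1 - u}) ` (U - {1 / 2}))"
  proof (rule card_eq_mult_card_image)
    fix u
    assume u: "u \<in> U - {1 / 2}"
    hence "1 - u \<in> U - {1 / 2}" and "u \<noteq> 1 - u"
      using closed two by (auto simp: field_simps)
    hence "{v \<in> U - {1 / 2}. {v, 1 - v} = {u, 1 - u}} = {u, 1 - u}"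
      using u by (auto simp: doubleton_eq_iff)
    thus "card {v \<in> U - {1 / 2}. {v, 1 - v} = {u, 1 - u}} = 2"
      using \<open>u \<noteq> 1 - u\<close> by simp
  qed (use assms(1) in simp)
  moreover have "card U = card (U - {1 / 2}) + 1"
    using assms(1,3) card_Suc_Diff1[of U "1 / 2"] by simp
  ultimately show ?thesis by simp
qed

text \<open>The set \<open>U\<close> of squares \<open>x\<^sup>2\<close> with \<open>x\<^sup>2 + y\<^sup>2 = 1\<close>, \<open>x, y \<noteq> 0\<close> has \<open>(q - 3)/4\<close> elements, an even
  number. Were \<open>2\<close> a square, \<open>1/2 \<in> U\<close> would be the only fixed point of \<open>u \<mapsto> 1 - u\<close> on \<open>U\<close>.\<close>

lemma qchar_two:
  assumes "CARD('a::{finite,field}) mod 8 = 3"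
  shows "qchar (2::'a) = -1"
proof (rule ccontr)
  have mod4: "CARD('a) mod 4 = 3" and odd: "odd CARD('a)" using assms by presburger+
  have two: "(2::'a) \<noteq> 0" by (rule two_neq_zero_if_odd_card[OF odd])
  assume "qchar (2::'a) \<noteq> -1"
  hence "qchar (2::'a) = 1" using qchar_nonzero_cases[OF odd two] by simp
  hence "qchar (1 / 2 :: 'a) = 1"
    using qchar_mult[of "1 / 2" "2::'a"] two by simp
  then obtain h :: 'a where h: "1 / 2 = h\<^sup>2"
    using exists_square_if_qchar_eq_1[OF odd] by blast
  define D where "D = {(x, y). (x::'a)\<^sup>2 + y\<^sup>2 = 1 \<and> x \<noteq> 0 \<and> y \<noteq> 0}"
  define U where "U = (\<lambda>(x, y). x\<^sup>2) ` D"
  have "4 * card U = CARD('a) - 3"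
    using card_unit_circle_off_axes[OF mod4] card_unit_circle_off_axes_eq_4_mult[OF odd]
    by (simp add: U_def D_def)
  hence "even (card U)" using assms by presburger
  moreover have "odd (card U)"
  proof (rule odd_card_if_closed_under_one_minus[OF _ two])
    show "finite U" by simp
    have "h \<noteq> 0" using h two by auto
    moreover have "h\<^sup>2 + h\<^sup>2 = 1" using two by (simp flip: h)
    ultimately have "(h, h) \<in> D" by (simp add: D_def)
    thus "1 / 2 \<in> U" by (force simp: U_def h)
    fix u
    assume "u \<in> U"
    then obtain x y where "(x, y) \<in> D" "u = x\<^sup>2" by (auto simp: U_def)
    hence "(y, x) \<in> D" and "1 - u = y\<^sup>2" by (auto simp: D_def algebra_simps)
    thus "1 - u \<in> U" by (force simp: U_def)
  qed
  ultimately show False by simp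
qed

lemma qchar_small_values:
  assumes "CARD('a::{finite,field}) mod 8 = 3"
  shows "qchar (4::'a) = 1" and "qchar (-2::'a) = 1" and "qchar (-4::'a) = -1"
    and "qchar (-8::'a) = 1"
proof -
  have mod4: "CARD('a) mod 4 = 3" and odd: "odd CARD('a)" using assms by presburger+
  have two: "(2::'a) \<noteq> 0" by (rule two_neq_zero_if_odd_card[OF odd])
  show four: "qchar (4::'a) = 1"
    using qchar_square[OF odd two] by (simp add: power2_eq_square)
  have "qchar (-1 * 2 :: 'a) = 1" and "qchar (-1 * 4 :: 'a) = -1" and "qchar (-1 * 2 * 4 :: 'a) = 1"
    unfolding qchar_mult qchar_minus_one[OF mod4] qchar_two[OF assms] four by simp_all
  thus "qchar (-2::'a) = 1" "qchar (-4::'a) = -1" "qchar (-8::'a) = 1" by simp_all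
qed

section \<open>Differential counts\<close>

definition diff_count :: "('a::ab_group_add \<Rightarrow> 'b::ab_group_add) \<Rightarrow> 'a \<Rightarrow> 'b \<Rightarrow> nat" where
  "diff_count f a c = card {x. f (x + a) - f x = c}"

lemma diff_count_reflect: "diff_count (\<lambda>x. - f (- x)) a c = diff_count f a c"
proof -
  have bij: "bij (\<lambda>x. - x - a)"
    by (rule o_bij[where g = "\<lambda>x. - x - a"]) (simp_all add: fun_eq_iff)
  have "diff_count (\<lambda>x. - f (- x)) a c = card {x. f ((- x - a) + a) - f (- x - a) = c}"
    unfolding diff_count_def by (rule arg_cong[where f = card]) (auto simp: algebra_simps)
  also have "\<dots> = diff_count f a c"
    unfolding diff_count_def by (rule card_Collect_bij[OF bij, of "\<lambda>y. f (y + a) - f y = c"])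
  finally show ?thesis .
qed

lemma diff_count_uminus: "diff_count f (- a) c = diff_count f a (- c)"
proof -
  have bij: "bij (\<lambda>x. x - a)"
    by (rule o_bij[where g = "\<lambda>x. x + a"]) (simp_all add: fun_eq_iff)
  have "diff_count f (- a) c = card {x. f ((x - a) + a) - f (x - a) = - c}"
    unfolding diff_count_def by (rule arg_cong[where f = card]) (auto simp: algebra_simps)
  also have "\<dots> = diff_count f a (- c)"
    unfolding diff_count_def by (rule card_Collect_bij[OF bij, of "\<lambda>y. f (y + a) - f y = - c"])
  finally show ?thesis .
qed

lemma diff_count_homogeneous:
  fixes f :: "'a::field \<Rightarrow> 'a"
  assumes "a \<noteq> 0" and hom: "\<And>x. f (a * x) = a\<^sup>2 * f x"
  shows "diff_count f a c = diff_count f 1 (c / a\<^sup>2)"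
proof -
  have bij: "bij (\<lambda>x. x / a)"
    by (rule o_bij[where g = "\<lambda>x. a * x"]) (use assms(1) in \<open>simp_all add: fun_eq_iff\<close>)
  have "f (x + a) - f x = a\<^sup>2 * (f (x / a + 1) - f (x / a))" for x
    using hom[of "x / a + 1"] hom[of "x / a"] assms(1) by (simp add: algebra_simps)
  hence "diff_count f a c = card {x. f (x / a + 1) - f (x / a) = c / a\<^sup>2}"
    unfolding diff_count_def using assms(1)
    by (intro arg_cong[where f = card]) (auto simp: eq_divide_eq mult.commute)
  also have "\<dots> = diff_count f 1 (c / a\<^sup>2)"
    unfolding diff_count_def by (rule card_Collect_bij[OF bij, of "\<lambda>y. f (y + 1) - f y = c / a\<^sup>2"])
  finally show ?thesis .
qed

lemma diff_uniformity_le: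
  fixes f :: "'a::{finite,field} poly"
  assumes "\<And>a c. a \<noteq> 0 \<Longrightarrow> diff_count (poly f) a c \<le> k"
  shows "diff_uniformity f \<le> k"
proof -
  let ?S = "{card {x. poly f (x + a) - poly f x = c} | a c. a \<noteq> 0}"
  have "?S \<subseteq> (\<lambda>(a, c). diff_count (poly f) a c) ` UNIV" by (auto simp: diff_count_def)
  hence "finite ?S" by (rule finite_subset) simp
  moreover have "card {x. poly f (x + 1) - poly f x = 0} \<in> ?S"
    by (rule CollectI, rule exI[of _ 1], rule exI[of _ 0]) simp
  hence "?S \<noteq> {}" by blast
  ultimately show ?thesis
    unfolding diff_uniformity_def using assms by (auto simp: diff_count_def intro!: Max.boundedI)
qed

section \<open>The twisted square\<close>

definition twisted_sq :: "'a::{finite,field} \<Rightarrow> 'a \<Rightarrow> 'a" where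
  "twisted_sq s x = x\<^sup>2 * (qchar x + s)"

lemma twisted_sq_uminus:
  fixes x :: "'a::{finite,field}"
  assumes "CARD('a) mod 4 = 3"
  shows "twisted_sq s (- x) = - twisted_sq (- s) x"
  by (simp add: twisted_sq_def qchar_uminus[OF assms] algebra_simps)

lemma twisted_sq_homogeneous:
  assumes "qchar a = 1"
  shows "twisted_sq s (a * x) = a\<^sup>2 * twisted_sq s x"
  using assms by (simp add: twisted_sq_def qchar_mult power_mult_distrib)

lemma qchar_qchar_plus:
  fixes x s :: "'a::{finite,field}"
  assumes "CARD('a) mod 8 = 3" and "s = 3 \<or> s = -3" and "x \<noteq> 0"
  shows "qchar (qchar x + s) = qchar x"
proof -
  have odd: "odd CARD('a)" using assms(1) by presburger
  have "qchar (1 + s) = 1 \<and> qchar (-1 + s) = -1"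
    using assms(2) qchar_two[OF assms(1)] qchar_small_values[OF assms(1)] by auto
  thus ?thesis using qchar_nonzero_cases[OF odd assms(3)] by auto
qed

lemma qchar_twisted_sq:
  fixes x s :: "'a::{finite,field}"
  assumes "CARD('a) mod 8 = 3" and "s = 3 \<or> s = -3"
  shows "qchar (twisted_sq s x) = qchar x"
proof (cases "x = 0")
  case False
  have "odd CARD('a)" using assms(1) by presburger
  thus ?thesis using False
    by (simp add: twisted_sq_def qchar_mult qchar_square qchar_qchar_plus[OF assms])
qed (simp add: twisted_sq_def)

lemma inj_twisted_sq:
  fixes s :: "'a::{finite,field}"
  assumes mod8: "CARD('a) mod 8 = 3" and s: "s = 3 \<or> s = -3"
  shows "inj (twisted_sq s)"
proof (rule injI)
  have odd: "odd CARD('a)" using mod8 by presburger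
  fix x y :: 'a
  assume eq: "twisted_sq s x = twisted_sq s y"
  hence qchar_eq: "qchar x = qchar y" using qchar_twisted_sq[OF mod8 s] by metis
  show "x = y"
  proof (cases "x = 0")
    case True
    thus ?thesis using qchar_eq qchar_eq_0_iff[OF odd, of y] qchar_zero[OF odd] by simp
  next
    case False
    hence "qchar x + s \<noteq> 0"
      using qchar_qchar_plus[OF mod8 s False] qchar_zero[OF odd] qchar_eq_0_iff[OF odd, of x] False
      by auto
    hence "x\<^sup>2 = y\<^sup>2" using eq qchar_eq by (simp add: twisted_sq_def)
    moreover have "x \<noteq> - y"
    proof
      assume "x = - y"
      moreover have "CARD('a) mod 4 = 3" using mod8 by presburger
      ultimately have "qchar x = - qchar x"
        using qchar_eq qchar_uminus[of y] by simp
      thus False using False two_neq_zero_if_odd_card[OF odd]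
        by (auto simp: qchar_eq_0_iff[OF odd] eq_neg_iff_add_eq_0)
    qed
    ultimately show ?thesis by (simp add: power2_eq_iff)
  qed
qed

lemma twisted_sq_3_at_square:
  fixes t :: "'a::{finite,field}"
  assumes "odd CARD('a)" and "qchar t \<noteq> -1"
  shows "twisted_sq 3 t = 4 * t\<^sup>2"
  using qchar_ne_minus_one_cases[OF assms] qchar_eq_0_iff[OF assms(1), of t]
  by (auto simp: twisted_sq_def)

lemma twisted_sq_3_at_nonsquare: "qchar t = -1 \<Longrightarrow> twisted_sq 3 t = 2 * t\<^sup>2"
  by (simp add: twisted_sq_def)

lemma twisted_sq_3_diff_cases:
  fixes t :: "'a::{finite,field}"
  assumes "odd CARD('a)"
  defines "\<Delta> \<equiv> twisted_sq 3 (t + 1) - twisted_sq 3 t"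
  shows "qchar t \<noteq> -1 \<Longrightarrow> qchar (t + 1) \<noteq> -1 \<Longrightarrow> \<Delta> = 8 * t + 4"
    and "qchar t \<noteq> -1 \<Longrightarrow> qchar (t + 1) = -1 \<Longrightarrow> 4 - \<Delta> = 2 * (t - 1)\<^sup>2"
    and "qchar t = -1 \<Longrightarrow> qchar (t + 1) \<noteq> -1 \<Longrightarrow> \<Delta> + 4 = 2 * (t + 2)\<^sup>2"
    and "qchar t = -1 \<Longrightarrow> qchar (t + 1) = -1 \<Longrightarrow> \<Delta> = 4 * t + 2"
proof -
  note square = twisted_sq_3_at_square[OF assms(1)] and nonsquare = twisted_sq_3_at_nonsquare
  show "\<Delta> = 8 * t + 4" if "qchar t \<noteq> -1" "qchar (t + 1) \<noteq> -1"
  proof -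
    have "\<Delta> = 4 * (t + 1)\<^sup>2 - 4 * t\<^sup>2" using that by (simp add: \<Delta>_def square)
    thus ?thesis by algebra
  qed
  show "4 - \<Delta> = 2 * (t - 1)\<^sup>2" if "qchar t \<noteq> -1" "qchar (t + 1) = -1"
  proof -
    have "\<Delta> = 2 * (t + 1)\<^sup>2 - 4 * t\<^sup>2" using that by (simp add: \<Delta>_def square nonsquare)
    thus ?thesis by algebra
  qed
  show "\<Delta> + 4 = 2 * (t + 2)\<^sup>2" if "qchar t = -1" "qchar (t + 1) \<noteq> -1"
  proof -
    have "\<Delta> = 4 * (t + 1)\<^sup>2 - 2 * t\<^sup>2" using that by (simp add: \<Delta>_def square nonsquare)
    thus ?thesis by algebra
  qed
  show "\<Delta> = 4 * t + 2" if "qchar t = -1" "qchar (t + 1) = -1"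
  proof -
    have "\<Delta> = 2 * (t + 1)\<^sup>2 - 2 * t\<^sup>2" using that by (simp add: \<Delta>_def nonsquare)
    thus ?thesis by algebra
  qed
qed

lemma square_branches_meet_only_at_0_1:
  fixes t0 t c :: "'a::{finite,field}"
  assumes mod8: "CARD('a) mod 8 = 3" and "qchar t0 \<noteq> -1"
    and lin: "c = 8 * t0 + 4" and quad: "4 - c = 2 * (t - 1)\<^sup>2"
  shows "t0 = 0 \<and> t = 1"
proof -
  have odd: "odd CARD('a)" using mod8 by presburger
  have "qchar (4 - c) = qchar t0"
    using lin qchar_mult[of "-8" t0] qchar_small_values(4)[OF mod8] by (simp add: algebra_simps)
  moreover have "qchar (4 - c) = - qchar ((t - 1)\<^sup>2)"
    using quad by (simp add: qchar_mult qchar_two[OF mod8])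
  moreover have "qchar ((t - 1)\<^sup>2) = 0 \<or> qchar ((t - 1)\<^sup>2) = 1"
    using qchar_square[OF odd, of "t - 1"] qchar_zero[OF odd] by (cases "t = 1") auto
  ultimately have "qchar t0 = 0" and "qchar ((t - 1)\<^sup>2) = 0"
    using qchar_ne_minus_one_cases[OF odd assms(2)] one_neq_minus_one_if_odd_card[OF odd]
    by auto
  thus ?thesis by (simp add: qchar_eq_0_iff[OF odd])
qed

lemma nonsquare_branches_exclusive:
  fixes t1 t2 u c :: "'a::{finite,field}"
  assumes mod8: "CARD('a) mod 8 = 3" and "t1 \<noteq> t2"
    and "qchar (t1 + 1) \<noteq> -1" and "qchar (t2 + 1) \<noteq> -1"
    and quad1: "c + 4 = 2 * (t1 + 2)\<^sup>2" and quad2: "c + 4 = 2 * (t2 + 2)\<^sup>2"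
    and "qchar (u + 1) = -1" and lin: "c = 4 * u + 2"
  shows False
proof -
  have odd: "odd CARD('a)" using mod8 by presburger
  have two: "(2::'a) \<noteq> 0" by (rule two_neq_zero_if_odd_card[OF odd])
  have "(t1 + 2)\<^sup>2 = (t2 + 2)\<^sup>2" using quad1 quad2 two by simp
  hence "t1 + 2 = - (t2 + 2)" using assms(2) by (simp add: power2_eq_iff)
  hence "t2 + 1 = - t1 - 3" by algebra
  hence "- 2 - c = 2 * ((t1 + 1) * (t2 + 1))" using quad1 by algebra
  hence "qchar (- 2 - c) = - (qchar (t1 + 1) * qchar (t2 + 1))"
    by (simp add: qchar_mult qchar_two[OF mod8])
  moreover have "qchar (- 2 - c) = 1"
  proof -
    have "- 2 - c = -4 * (u + 1)" using lin by (simp add: algebra_simps)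
    show ?thesis unfolding \<open>- 2 - c = -4 * (u + 1)\<close> qchar_mult using assms(7) qchar_small_values(3)[OF mod8] by simp
  qed
  ultimately show False
    using qchar_ne_minus_one_cases[OF odd assms(3)] qchar_ne_minus_one_cases[OF odd assms(4)]
      one_neq_minus_one_if_odd_card[OF odd]
    by auto
qed

lemma card_diff_solutions_at_squares_le_2:
  fixes c :: "'a::{finite,field}"
  assumes mod8: "CARD('a) mod 8 = 3"
  shows "card {t. twisted_sq 3 (t + 1) - twisted_sq 3 t = c \<and> qchar t \<noteq> -1} \<le> 2"
proof -
  have odd: "odd CARD('a)" using mod8 by presburger
  have two: "(2::'a) \<noteq> 0" by (rule two_neq_zero_if_odd_card[OF odd])
  have "(2::'a) * 2 * 2 \<noteq> 0" using two by (intro no_zero_divisors)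
  hence eight: "(8::'a) \<noteq> 0" by simp
  define T where "T = {t. twisted_sq 3 (t + 1) - twisted_sq 3 t = c \<and> qchar t \<noteq> -1}"
  define A where "A = {t \<in> T. qchar (t + 1) \<noteq> -1}"
  define B where "B = {t \<in> T. qchar (t + 1) = -1}"
  have "T = A \<union> B" by (auto simp: A_def B_def)
  have lin: "c = 8 * t + 4" if "t \<in> A" for t
    using that twisted_sq_3_diff_cases(1)[OF odd, of t] by (simp add: A_def T_def)
  have quad: "4 - c = 2 * (t - 1)\<^sup>2" if "t \<in> B" for t
    using that twisted_sq_3_diff_cases(2)[OF odd, of t] by (simp add: B_def T_def)
  have "A \<subseteq> {t. 8 * t + 4 = c}" using lin by auto
  hence "card A \<le> card {t. 8 * t + 4 = c}" by (rule card_mono[OF finite])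
  also have "\<dots> \<le> 1" by (rule card_linear_eq_le_1[OF eight])
  finally have "card A \<le> 1" .
  have "card B \<le> 2"
  proof -
    have "B \<subseteq> {t. (t + -1)\<^sup>2 = (4 - c) / 2}"
      using quad two by (auto simp: eq_divide_eq)
    hence "card B \<le> card {t. (t + -1)\<^sup>2 = (4 - c) / 2}" by (rule card_mono[OF finite])
    also have "\<dots> \<le> 2" by (rule card_shifted_square_eq_le_2)
    finally show ?thesis .
  qed
  have "card B \<le> 1" if "A \<noteq> {}"
  proof -
    from that obtain t0 where t0: "t0 \<in> A" by blast
    hence "qchar t0 \<noteq> -1" by (simp add: A_def T_def)
    hence "t = 1" if "t \<in> B" for t
      using square_branches_meet_only_at_0_1[OF mod8 _ lin[OF t0] quad[OF that]] by blast
    hence "B \<subseteq> {1}" by blast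
    hence "card B \<le> card {1::'a}" by (rule card_mono[OF finite])
    thus ?thesis by simp
  qed
  moreover have "card T \<le> card A + card B"
    unfolding \<open>T = A \<union> B\<close> by (rule card_Un_le)
  ultimately have "card T \<le> 2"
    using \<open>card A \<le> 1\<close> \<open>card B \<le> 2\<close> by (cases "A = {}") auto
  thus ?thesis by (simp add: T_def)
qed

lemma card_diff_solutions_at_nonsquares_le_2:
  fixes c :: "'a::{finite,field}"
  assumes mod8: "CARD('a) mod 8 = 3"
  shows "card {t. twisted_sq 3 (t + 1) - twisted_sq 3 t = c \<and> qchar t = -1} \<le> 2"
proof -
  have odd: "odd CARD('a)" using mod8 by presburger
  have two: "(2::'a) \<noteq> 0" by (rule two_neq_zero_if_odd_card[OF odd])
  have "(2::'a) * 2 \<noteq> 0" using two by (intro no_zero_divisors)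
  hence four: "(4::'a) \<noteq> 0" by simp
  define T where "T = {t. twisted_sq 3 (t + 1) - twisted_sq 3 t = c \<and> qchar t = -1}"
  define C where "C = {t \<in> T. qchar (t + 1) \<noteq> -1}"
  define D where "D = {t \<in> T. qchar (t + 1) = -1}"
  have "T = C \<union> D" by (auto simp: C_def D_def)
  have quad: "c + 4 = 2 * (t + 2)\<^sup>2" if "t \<in> C" for t
    using that twisted_sq_3_diff_cases(3)[OF odd, of t] by (simp add: C_def T_def)
  have lin: "c = 4 * t + 2" if "t \<in> D" for t
    using that twisted_sq_3_diff_cases(4)[OF odd, of t] by (simp add: D_def T_def)
  have "D \<subseteq> {t. 4 * t + 2 = c}" using lin by auto
  hence "card D \<le> card {t. 4 * t + 2 = c}" by (rule card_mono[OF finite])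
  also have "\<dots> \<le> 1" by (rule card_linear_eq_le_1[OF four])
  finally have "card D \<le> 1" .
  have "card C \<le> 2"
  proof -
    have "C \<subseteq> {t. (t + 2)\<^sup>2 = (c + 4) / 2}"
      using quad two by (auto simp: eq_divide_eq)
    hence "card C \<le> card {t. (t + 2)\<^sup>2 = (c + 4) / 2}" by (rule card_mono[OF finite])
    also have "\<dots> \<le> 2" by (rule card_shifted_square_eq_le_2)
    finally show ?thesis .
  qed
  have "D = {}" if "\<not> card C \<le> 1"
  proof -
    from that obtain t1 t2 where t12: "t1 \<in> C" "t2 \<in> C" "t1 \<noteq> t2"
      unfolding One_nat_def card_le_Suc0_iff_eq[OF finite] by blast
    hence "qchar (t1 + 1) \<noteq> -1" "qchar (t2 + 1) \<noteq> -1" by (simp_all add: C_def)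
    have False if u: "u \<in> D" for u
      using nonsquare_branches_exclusive[OF mod8 \<open>t1 \<noteq> t2\<close> \<open>qchar (t1 + 1) \<noteq> -1\<close>
          \<open>qchar (t2 + 1) \<noteq> -1\<close> quad[OF t12(1)] quad[OF t12(2)] _ lin[OF u]] u
      by (simp add: D_def)
    thus ?thesis by blast
  qed
  moreover have "card T \<le> card C + card D"
    unfolding \<open>T = C \<union> D\<close> by (rule card_Un_le)
  ultimately have "card T \<le> 2"
    using \<open>card C \<le> 2\<close> \<open>card D \<le> 1\<close> by (cases "card C \<le> 1") auto
  thus ?thesis by (simp add: T_def)
qed

lemma diff_count_twisted_sq_3_le_4:
  assumes "CARD('a::{finite,field}) mod 8 = 3"
  shows "diff_count (twisted_sq (3::'a)) 1 c \<le> 4"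
proof -
  have "{t. twisted_sq 3 (t + 1) - twisted_sq 3 t = c}
      = {t. twisted_sq 3 (t + 1) - twisted_sq 3 t = c \<and> qchar t \<noteq> -1}
        \<union> {t. twisted_sq (3::'a) (t + 1) - twisted_sq 3 t = c \<and> qchar t = -1}"
    by blast
  hence "diff_count (twisted_sq (3::'a)) 1 c
      \<le> card {t. twisted_sq 3 (t + 1) - twisted_sq 3 t = c \<and> qchar t \<noteq> -1}
        + card {t. twisted_sq 3 (t + 1) - twisted_sq 3 t = c \<and> qchar t = -1}"
    unfolding diff_count_def by (simp only: card_Un_le)
  thus ?thesis
    using card_diff_solutions_at_squares_le_2[OF assms, of c]
      card_diff_solutions_at_nonsquares_le_2[OF assms, of c] by linarith
qed

lemma diff_count_twisted_sq_le_4: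
  fixes s a c :: "'a::{finite,field}"
  assumes mod8: "CARD('a) mod 8 = 3" and s: "s = 3 \<or> s = -3" and "a \<noteq> 0"
  shows "diff_count (twisted_sq s) a c \<le> 4"
proof -
  have mod4: "CARD('a) mod 4 = 3" and odd: "odd CARD('a)" using mod8 by presburger+
  have at_one: "diff_count (twisted_sq s) 1 c' \<le> 4" for c'
    using s
  proof
    assume "s = -3"
    hence "twisted_sq s = (\<lambda>x. - twisted_sq 3 (- x))"
      using twisted_sq_uminus[OF mod4, of 3] by (simp add: fun_eq_iff)
    thus ?thesis using diff_count_twisted_sq_3_le_4[OF mod8] by (simp add: diff_count_reflect)
  qed (simp add: diff_count_twisted_sq_3_le_4[OF mod8])
  obtain b where b: "qchar b = 1" "b \<noteq> 0" and "a = b \<or> a = - b"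
    using qchar_nonzero_cases[OF odd \<open>a \<noteq> 0\<close>] qchar_uminus[OF mod4, of a] \<open>a \<noteq> 0\<close>
    by (metis minus_minus neg_equal_0_iff_equal)
  moreover have "diff_count (twisted_sq s) b c' = diff_count (twisted_sq s) 1 (c' / b\<^sup>2)" for c'
    using b by (intro diff_count_homogeneous twisted_sq_homogeneous)
  ultimately show ?thesis
    using at_one diff_count_uminus[of "twisted_sq s" b c] by auto
qed

theorem corollary1p3:
  fixes s :: "'a::{finite,field}"
  assumes "CARD('a) mod 8 = 3"
    and "s = 3 \<or> s = -3"
  defines "f \<equiv> [:0, 0, 1:] * (monom 1 ((CARD('a) - 1) div 2) + [:s:])"
  shows "permutation_poly f \<and> diff_uniformity f \<le> 4"
proof
  have poly_f: "poly f = twisted_sq s"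
    by (simp add: f_def fun_eq_iff twisted_sq_def qchar_def poly_monom power2_eq_square)
  show "permutation_poly f"
    unfolding permutation_poly_def poly_f bij_def
    using inj_twisted_sq[OF assms(1,2)] finite_UNIV_inj_surj[of "twisted_sq s"] by simp
  show "diff_uniformity f \<le> 4"
    by (rule diff_uniformity_le) (simp add: poly_f diff_count_twisted_sq_le_4[OF assms(1,2)])
qed

end
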